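(* Let $G$ be a $\sigma$-compact locally compact Abelian group, $C>0$, and $\{P_\varepsilon\}_{0<\varepsilon<C}$ a family of subsets of $G$ satisfying: (A1) $0\in P_\varepsilon=-P_\varepsilon$ for all $0<\varepsilon<C$; (A2) each $P_\varepsilon$ is locally finite; (A3) $P_\varepsilon+P_{\varepsilon'}\subset P_{\varepsilon+\varepsilon'}$ whenever $\varepsilon+\varepsilon'<C$; (A4) each $P_\varepsilon$ is relatively dense. Then for every $0<\varepsilon<C$ the set $P_\varepsilon+\bigcap_{0<\varepsilon'<C}P_{\varepsilon'}$ is a model set. In particular, if $\bigcap_{0<\varepsilon'<C}P_{\varepsilon'}=\{0\}$, then every $P_\varepsilon$, $0<\varepsilon<C$, is a model set.
   Context: Locally finite: finite intersection with every compact set. Relatively dense: $A+K=G$ for some compact $K$. A cut and project scheme $(G\times H,\widetilde L)$: $H$ a locally compact Abelian group, $\widetilde L\subset G\times H$ a lattice (discrete, cocompact subgroup) such that $\pi_1|_{\widetilde L}$ is injective and $\pi_2(\widetilde L)$ is dense in $H$; for $x\in\pi_1(\widetilde L)$, $x^\star:=\pi_2((\pi_1|_{\widetilde L})^{-1}(x))$. For $W\subset H$, $\Lambda(W):=\{x\in\pi_1(\widetilde L): x^\star\in W\}$. A model set is a set of the form $\Lambda(W)$ for some cut and project scheme and some precompact $W\subset H$ with nonempty interior. *)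

theory Defs
  imports "HOL-Analysis.Analysis"
begin

definition sigma_compact_lca_group :: "'a::{topological_space, ab_group_add} itself \<Rightarrow> bool" where
  "sigma_compact_lca_group _ \<longleftrightarrow>
     continuous_on UNIV (\<lambda>p::'a \<times> 'a. fst p + snd p) \<and>
     continuous_on UNIV (\<lambda>x::'a. - x) \<and>
     Hausdorff_space (euclidean :: 'a topology) \<and>
     locally_compact_space (euclidean :: 'a topology) \<and>
     (\<exists>K :: nat \<Rightarrow> 'a set. (\<forall>n. compact (K n)) \<and> (\<Union>n. K n) = UNIV)"

definition sumset :: "'a::plus set \<Rightarrow> 'a set \<Rightarrow> 'a set" where
  "sumset A B = {a + b | a b. a \<in> A \<and> b \<in> B}"

definition locally_finite_set :: "'a::topological_space set \<Rightarrow> bool" where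
  "locally_finite_set A \<longleftrightarrow> (\<forall>K. compact K \<longrightarrow> finite (A \<inter> K))"

definition relatively_dense :: "'a::{topological_space, plus} set \<Rightarrow> bool" where
  "relatively_dense A \<longleftrightarrow> (\<exists>K. compact K \<and> sumset A K = UNIV)"

definition lca_group_on :: "'h topology \<Rightarrow> ('h \<Rightarrow> 'h \<Rightarrow> 'h) \<Rightarrow> ('h \<Rightarrow> 'h) \<Rightarrow> 'h \<Rightarrow> bool" where
  "lca_group_on T add neg z \<longleftrightarrow>
     z \<in> topspace T \<and>
     (\<forall>x\<in>topspace T. \<forall>y\<in>topspace T. add x y \<in> topspace T) \<and>
     (\<forall>x\<in>topspace T. neg x \<in> topspace T) \<and>
     (\<forall>x\<in>topspace T. \<forall>y\<in>topspace T. \<forall>w\<in>topspace T. add (add x y) w = add x (add y w)) \<and>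
     (\<forall>x\<in>topspace T. \<forall>y\<in>topspace T. add x y = add y x) \<and>
     (\<forall>x\<in>topspace T. add z x = x) \<and>
     (\<forall>x\<in>topspace T. add (neg x) x = z) \<and>
     continuous_map (prod_topology T T) T (\<lambda>p. add (fst p) (snd p)) \<and>
     continuous_map T T neg \<and>
     Hausdorff_space T \<and>
     locally_compact_space T"

definition cut_and_project_scheme ::
  "'h topology \<Rightarrow> ('h \<Rightarrow> 'h \<Rightarrow> 'h) \<Rightarrow> ('h \<Rightarrow> 'h) \<Rightarrow> 'h \<Rightarrow> ('a::{topological_space, ab_group_add} \<times> 'h) set \<Rightarrow> bool" where
  "cut_and_project_scheme T add neg z L \<longleftrightarrow>
     L \<subseteq> UNIV \<times> topspace T \<and>
     (0, z) \<in> L \<and>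
     (\<forall>p\<in>L. \<forall>q\<in>L. (fst p + fst q, add (snd p) (snd q)) \<in> L) \<and>
     (\<forall>p\<in>L. (- fst p, neg (snd p)) \<in> L) \<and>
     (\<forall>p\<in>L. \<exists>U. openin (prod_topology euclidean T) U \<and> U \<inter> L = {p}) \<and>
     (\<exists>K. compactin (prod_topology euclidean T) K \<and>
        (\<forall>q \<in> UNIV \<times> topspace T. \<exists>l\<in>L. \<exists>k\<in>K. q = (fst l + fst k, add (snd l) (snd k)))) \<and>
     inj_on fst L \<and>
     T closure_of (snd ` L) = topspace T"

definition star_map :: "('a \<times> 'h) set \<Rightarrow> 'a \<Rightarrow> 'h" where
  "star_map L x = snd (THE l. l \<in> L \<and> fst l = x)"

definition window_set :: "('a \<times> 'h) set \<Rightarrow> 'h set \<Rightarrow> 'a set" where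
  "window_set L W = {x \<in> fst ` L. star_map L x \<in> W}"

definition model_set :: "'a::{topological_space, ab_group_add} set \<Rightarrow> bool" where
  "model_set A \<longleftrightarrow>
     (\<exists>(T :: 'a set set topology) add neg z L W.
        lca_group_on T add neg z \<and>
        cut_and_project_scheme T add neg z L \<and>
        W \<subseteq> topspace T \<and>
        compactin T (T closure_of W) \<and>
        T interior_of W \<noteq> {} \<and>
        A = window_set L W)"

end

(*
  The sets P e are the balls of the invariant pseudometric N (x - y), where N w is the least scale
  e at which w lies in P e (capped at C); the set of points of pseudonorm 0 is the intersection of
  all P e. The internal group H is the Hausdorff completion of G for this pseudometric, realised as
  the uniform closure of the functions N (x - _), with inf-convolution as group law. Relative
  density and local finiteness of the balls make the closed balls of H totally bounded, hence
  compact, so H is locally compact; they also make the graph of the dense embedding of G into H a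
  lattice in G x H, whose star map is that embedding. A set lying between the open and the closed
  e-ball of N that is invariant under adding points of pseudonorm 0 is then the model set with
  window its image together with the open e-ball of H; P e plus the intersection is such a set.
*)

theory Submission
  imports Defs
begin

lemma sumsetI: "a \<in> A \<Longrightarrow> b \<in> B \<Longrightarrow> a + b \<in> sumset A B"
  unfolding sumset_def by blast

lemma sumsetE:
  assumes "z \<in> sumset A B"
  obtains a b where "a \<in> A" "b \<in> B" "z = a + b"
  using assms unfolding sumset_def by blast

lemma sumset_zero_right [simp]: "sumset A {0} = (A :: 'a::monoid_add set)"
  unfolding sumset_def by auto

lemma sumset_mono: "A \<subseteq> A' \<Longrightarrow> sumset A B \<subseteq> sumset A' B"
  unfolding sumset_def by blast

lemma relatively_dense_mono:
  assumes "relatively_dense A" "A \<subseteq> B"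
  shows "relatively_dense B"
proof -
  obtain K where "compact K" "sumset A K = UNIV"
    using assms(1) unfolding relatively_dense_def by blast
  moreover have "sumset A K \<subseteq> sumset B K" using assms(2) by (rule sumset_mono)
  ultimately show ?thesis unfolding relatively_dense_def by blast
qed

lemma locally_finite_set_subset:
  assumes "locally_finite_set B" "A \<subseteq> B"
  shows "locally_finite_set A"
  unfolding locally_finite_set_def
proof (intro allI impI)
  fix K :: "'a set" assume "compact K"
  then have "finite (B \<inter> K)" using assms(1) unfolding locally_finite_set_def by blast
  moreover have "A \<inter> K \<subseteq> B \<inter> K" using assms(2) by blast
  ultimately show "finite (A \<inter> K)" by (rule finite_subset[rotated])
qed

lemma (in Metric_space) mtotally_bounded_of_cover:
  assumes "S \<subseteq> M"
    and cover: "\<And>e. e > 0 \<Longrightarrow> \<exists>K. finite K \<and> K \<subseteq> M \<and> S \<subseteq> (\<Union>x\<in>K. mball x e)"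
  shows "mtotally_bounded S"
  unfolding mtotally_bounded_def
proof (intro allI impI)
  fix e :: real assume "e > 0"
  then obtain K where K: "finite K" "K \<subseteq> M" "S \<subseteq> (\<Union>x\<in>K. mball x (e/2))"
    using cover[of "e/2"] by auto
  define K' where "K' = {k \<in> K. S \<inter> mball k (e/2) \<noteq> {}}"
  define pick where "pick k = (SOME s. s \<in> S \<inter> mball k (e/2))" for k
  have pick: "pick k \<in> S \<inter> mball k (e/2)" if k: "k \<in> K'" for k
  proof -
    obtain s where "s \<in> S \<inter> mball k (e/2)" using k unfolding K'_def by blast
    then show ?thesis unfolding pick_def by (rule someI)
  qed
  show "\<exists>K. finite K \<and> K \<subseteq> S \<and> S \<subseteq> (\<Union>x\<in>K. mball x e)"
  proof (intro exI conjI)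
    show "finite (pick ` K')" using K(1) unfolding K'_def by simp
    show "pick ` K' \<subseteq> S" using pick by blast
    show "S \<subseteq> (\<Union>x\<in>pick ` K'. mball x e)"
    proof
      fix s assume s: "s \<in> S"
      then obtain k where k: "k \<in> K" "s \<in> mball k (e/2)" using K(3) by blast
      then have "k \<in> K'" unfolding K'_def using s by blast
      then have "pick k \<in> M" "d k (pick k) < e/2" using pick by auto
      moreover have "d (pick k) s \<le> d (pick k) k + d k s"
        using \<open>pick k \<in> M\<close> k assms(1) s by (intro triangle) auto
      ultimately have "s \<in> mball (pick k) e"
        using k(2) commute[of "pick k" k] by auto
      then show "s \<in> (\<Union>x\<in>pick ` K'. mball x e)" using \<open>k \<in> K'\<close> by blast
    qed
  qed
qed

definition uniformly_close :: "('a \<Rightarrow> real) \<Rightarrow> ('a \<Rightarrow> real) \<Rightarrow> real \<Rightarrow> bool" where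
  "uniformly_close f g e \<longleftrightarrow> (\<forall>y. \<bar>f y - g y\<bar> \<le> e)"

lemma uniformly_close_refl: "0 \<le> e \<Longrightarrow> uniformly_close f f e"
  by (simp add: uniformly_close_def)

lemma uniformly_close_sym: "uniformly_close f g e \<Longrightarrow> uniformly_close g f e"
  by (simp add: uniformly_close_def abs_minus_commute)

lemma uniformly_close_trans:
  "uniformly_close f g a \<Longrightarrow> uniformly_close g h b \<Longrightarrow> uniformly_close f h (a + b)"
  unfolding uniformly_close_def
proof (intro allI)
  fix y
  assume "\<forall>y. \<bar>f y - g y\<bar> \<le> a" "\<forall>y. \<bar>g y - h y\<bar> \<le> b"
  then have "\<bar>f y - g y\<bar> \<le> a" "\<bar>g y - h y\<bar> \<le> b" by blast+
  then show "\<bar>f y - h y\<bar> \<le> a + b" by linarith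
qed

lemma uniformly_close_comp: "uniformly_close f g e \<Longrightarrow> uniformly_close (f \<circ> h) (g \<circ> h) e"
  by (simp add: uniformly_close_def)

lemma eq_if_uniformly_close_approx:
  assumes "\<And>e. e > 0 \<Longrightarrow> \<exists>h. uniformly_close f h e \<and> uniformly_close g h e"
  shows "f = g"
proof
  fix y
  have "\<bar>f y - g y\<bar> \<le> 0 + e" if "e > 0" for e
  proof -
    obtain h where "uniformly_close f h (e/2)" "uniformly_close g h (e/2)"
      using assms[of "e/2"] \<open>e > 0\<close> by auto
    then have "uniformly_close f g (e/2 + e/2)"
      by (rule uniformly_close_trans[OF _ uniformly_close_sym])
    then show ?thesis by (simp add: uniformly_close_def)
  qed
  then show "f y = g y"
    using field_le_epsilon[of "\<bar>f y - g y\<bar>" 0] by simp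
qed

definition sup_dist :: "('a \<Rightarrow> real) \<Rightarrow> ('a \<Rightarrow> real) \<Rightarrow> real" where
  "sup_dist f g = (SUP y. \<bar>f y - g y\<bar>)"

lemma sup_dist_le: "uniformly_close f g e \<Longrightarrow> sup_dist f g \<le> e"
  unfolding sup_dist_def uniformly_close_def by (rule cSUP_least) auto

lemma sup_dist_ge: "bdd_above (range (\<lambda>y. \<bar>f y - g y\<bar>)) \<Longrightarrow> \<bar>f y - g y\<bar> \<le> sup_dist f g"
  unfolding sup_dist_def by (rule cSUP_upper) auto

lemma sup_dist_commute: "sup_dist f g = sup_dist g f"
  by (simp add: sup_dist_def abs_minus_commute)

section \<open>The completion of a group with an invariant pseudometric\<close>

locale group_seminorm =
  fixes N :: "'a::ab_group_add \<Rightarrow> real"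
  assumes nonneg: "0 \<le> N x"
    and zero [simp]: "N 0 = 0"
    and minus: "N (- x) = N x"
    and add_le: "N (x + y) \<le> N x + N y"
begin

lemma diff_commute: "N (x - y) = N (y - x)"
  by (metis minus minus_diff_eq)

lemma diff_triangle: "N (x - z) \<le> N (x - y) + N (y - z)"
  using add_le[of "x - y" "y - z"] by simp

definition nfun :: "'a \<Rightarrow> 'a \<Rightarrow> real" where
  "nfun x y = N (x - y)"

text \<open>The uniform closure of the functions \<open>nfun x\<close> models the Hausdorff completion of \<open>G\<close>
  for the pseudometric \<open>N (x - y)\<close>, with \<open>nfun\<close> as the canonical isometric embedding.\<close>

definition cfuns :: "('a \<Rightarrow> real) set" where
  "cfuns = {f. \<forall>e>0. \<exists>x. uniformly_close f (nfun x) e}"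

lemma nfun_in_cfuns: "nfun x \<in> cfuns"
  unfolding cfuns_def using uniformly_close_refl less_imp_le by blast

lemma cfuns_approx: "f \<in> cfuns \<Longrightarrow> e > 0 \<Longrightarrow> \<exists>x. uniformly_close f (nfun x) e"
  unfolding cfuns_def by blast

lemma cfunsI:
  assumes "\<And>e. e > 0 \<Longrightarrow> \<exists>g\<in>cfuns. uniformly_close f g e"
  shows "f \<in> cfuns"
  unfolding cfuns_def
proof (intro CollectI allI impI)
  fix e :: real assume "e > 0"
  then obtain g where g: "g \<in> cfuns" "uniformly_close f g (e/2)"
    using assms[of "e/2"] by auto
  obtain x where "uniformly_close g (nfun x) (e/2)"
    using cfuns_approx[OF g(1), of "e/2"] \<open>e > 0\<close> by auto
  then have "uniformly_close f (nfun x) (e/2 + e/2)"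
    by (rule uniformly_close_trans[OF g(2)])
  then show "\<exists>x. uniformly_close f (nfun x) e" by auto
qed

lemma uniformly_close_nfun: "uniformly_close (nfun x) (nfun y) (N (x - y))"
  unfolding uniformly_close_def nfun_def
proof
  fix z
  show "\<bar>N (x - z) - N (y - z)\<bar> \<le> N (x - y)"
    using diff_triangle[of x z y] diff_triangle[of y z x] diff_commute[of x y] by linarith
qed

lemma cfuns_nonneg: assumes "f \<in> cfuns" shows "0 \<le> f y"
proof -
  have "- f y \<le> 0 + e" if "e > 0" for e
  proof -
    obtain x where "uniformly_close f (nfun x) e" using cfuns_approx[OF assms \<open>e > 0\<close>] ..
    then have "\<bar>f y - N (x - y)\<bar> \<le> e" unfolding uniformly_close_def nfun_def by blast
    then show ?thesis using nonneg[of "x - y"] by linarith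
  qed
  then show ?thesis using field_le_epsilon[of "- f y" 0] by simp
qed

lemma cfuns_lipschitz: assumes "f \<in> cfuns" shows "f z \<le> f y + N (y - z)"
proof (rule field_le_epsilon)
  fix e :: real assume "e > 0"
  then obtain x where "uniformly_close f (nfun x) (e/2)"
    using cfuns_approx[OF assms, of "e/2"] by auto
  then have "\<bar>f z - N (x - z)\<bar> \<le> e/2" "\<bar>f y - N (x - y)\<bar> \<le> e/2"
    unfolding uniformly_close_def nfun_def by blast+
  then show "f z \<le> f y + N (y - z) + e" using diff_triangle[of x z y] by linarith
qed

lemma cfuns_triangle: assumes "f \<in> cfuns" shows "N (y - z) \<le> f y + f z"
proof (rule field_le_epsilon)
  fix e :: real assume "e > 0"
  then obtain x where "uniformly_close f (nfun x) (e/2)"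
    using cfuns_approx[OF assms, of "e/2"] by auto
  then have "\<bar>f z - N (x - z)\<bar> \<le> e/2" "\<bar>f y - N (x - y)\<bar> \<le> e/2"
    unfolding uniformly_close_def nfun_def by blast+
  then show "N (y - z) \<le> f y + f z + e"
    using diff_triangle[of y z x] diff_commute[of y x] by linarith
qed

lemma cfuns_small_value: assumes "f \<in> cfuns" "e > 0" shows "\<exists>y. f y \<le> e"
proof -
  obtain x where "uniformly_close f (nfun x) e" using cfuns_approx[OF assms] ..
  then have "\<bar>f x - nfun x x\<bar> \<le> e" unfolding uniformly_close_def by blast
  then have "f x \<le> e" by (simp add: nfun_def)
  then show ?thesis ..
qed

lemma cfuns_bdd:
  assumes "f \<in> cfuns" "g \<in> cfuns"
  shows "bdd_above (range (\<lambda>y. \<bar>f y - g y\<bar>))"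
proof -
  obtain x where fx: "uniformly_close f (nfun x) 1"
    using cfuns_approx[OF assms(1) zero_less_one] ..
  obtain y where gy: "uniformly_close g (nfun y) 1"
    using cfuns_approx[OF assms(2) zero_less_one] ..
  have "uniformly_close f g (1 + N (x - y) + 1)"
    by (rule uniformly_close_trans[OF uniformly_close_trans[OF fx uniformly_close_nfun]
          uniformly_close_sym[OF gy]])
  then have "\<bar>f z - g z\<bar> \<le> 1 + N (x - y) + 1" for z
    unfolding uniformly_close_def by blast
  then show ?thesis by (intro bdd_aboveI) blast
qed

lemma uniformly_close_sup_dist: "f \<in> cfuns \<Longrightarrow> g \<in> cfuns \<Longrightarrow> uniformly_close f g (sup_dist f g)"
  unfolding uniformly_close_def by (blast intro: sup_dist_ge[OF cfuns_bdd])

lemma sup_dist_nonneg: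
  assumes "f \<in> cfuns" "g \<in> cfuns"
  shows "0 \<le> sup_dist f g"
proof -
  have "\<bar>f y - g y\<bar> \<le> sup_dist f g" for y
    using uniformly_close_sup_dist[OF assms] unfolding uniformly_close_def by blast
  then show ?thesis using order_trans[OF abs_ge_zero] by blast
qed

lemma sup_dist_eq_0_iff:
  assumes "f \<in> cfuns" "g \<in> cfuns"
  shows "sup_dist f g = 0 \<longleftrightarrow> f = g"
proof
  assume "sup_dist f g = 0"
  then have "\<bar>f y - g y\<bar> \<le> 0" for y
    using uniformly_close_sup_dist[OF assms] unfolding uniformly_close_def by simp
  then show "f = g" by (intro ext) simp
next
  assume "f = g"
  have "sup_dist g g \<le> 0"
    by (rule sup_dist_le[OF uniformly_close_refl]) simp
  then show "sup_dist f g = 0"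
    using sup_dist_nonneg[OF assms] unfolding \<open>f = g\<close> by linarith
qed

lemma sup_dist_triangle:
  assumes "f \<in> cfuns" "g \<in> cfuns" "h \<in> cfuns"
  shows "sup_dist f h \<le> sup_dist f g + sup_dist g h"
proof (rule sup_dist_le)
  show "uniformly_close f h (sup_dist f g + sup_dist g h)"
    by (rule uniformly_close_trans; rule uniformly_close_sup_dist) (use assms in auto)
qed

lemma sup_dist_nfun: "sup_dist (nfun x) (nfun y) = N (x - y)"
proof (rule order_antisym)
  show "sup_dist (nfun x) (nfun y) \<le> N (x - y)"
    by (rule sup_dist_le[OF uniformly_close_nfun])
  have "\<bar>nfun x y - nfun y y\<bar> \<le> sup_dist (nfun x) (nfun y)"
    using uniformly_close_sup_dist[OF nfun_in_cfuns nfun_in_cfuns] unfolding uniformly_close_def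
    by blast
  then show "N (x - y) \<le> sup_dist (nfun x) (nfun y)"
    using nonneg[of "x - y"] by (simp add: nfun_def)
qed

lemma cfuns_complete:
  assumes f: "\<And>n. f n \<in> cfuns"
    and cauchy: "\<And>e. e > 0 \<Longrightarrow> \<exists>M. \<forall>m n. M \<le> m \<longrightarrow> M \<le> n \<longrightarrow> sup_dist (f m) (f n) < e"
  shows "\<exists>\<phi>\<in>cfuns. \<forall>e>0. \<forall>\<^sub>F n in sequentially. uniformly_close (f n) \<phi> e"
proof -
  have "uniformly_Cauchy_on UNIV f"
    unfolding uniformly_Cauchy_on_def dist_real_def
  proof (intro allI impI)
    fix e :: real assume "e > 0"
    then obtain M where M: "\<And>m n. M \<le> m \<Longrightarrow> M \<le> n \<Longrightarrow> sup_dist (f m) (f n) < e"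
      using cauchy by blast
    have "\<bar>f m y - f n y\<bar> < e" if "M \<le> m" "M \<le> n" for y m n
      using uniformly_close_sup_dist[OF f f, of m n] M[OF that]
      unfolding uniformly_close_def by (meson le_less_trans)
    then show "\<exists>M. \<forall>y\<in>UNIV. \<forall>m\<ge>M. \<forall>n\<ge>M. \<bar>f m y - f n y\<bar> < e" by blast
  qed
  then obtain \<phi> where lim: "uniform_limit UNIV f \<phi> sequentially"
    using Cauchy_uniformly_convergent uniformly_convergent_on_def by blast
  have close: "\<forall>\<^sub>F n in sequentially. uniformly_close (f n) \<phi> e" if "e > 0" for e
    using uniform_limitD[OF lim that]
    by eventually_elim (simp add: uniformly_close_def dist_real_def less_imp_le)
  have "\<phi> \<in> cfuns"
  proof (rule cfunsI)
    fix e :: real assume "e > 0"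
    then obtain n where "uniformly_close (f n) \<phi> e"
      using close[OF \<open>e > 0\<close>] unfolding eventually_sequentially by blast
    then show "\<exists>g\<in>cfuns. uniformly_close \<phi> g e"
      by (rule bexI[OF uniformly_close_sym f])
  qed
  then show ?thesis using close by blast
qed

definition inf_conv :: "('a \<Rightarrow> real) \<Rightarrow> ('a \<Rightarrow> real) \<Rightarrow> 'a \<Rightarrow> real" where
  "inf_conv f g z = (INF u. f u + g (z - u))"

lemma inf_conv_le:
  assumes "f \<in> cfuns" "g \<in> cfuns"
  shows "inf_conv f g z \<le> f u + g (z - u)"
  unfolding inf_conv_def
proof (rule cINF_lower)
  show "bdd_below (range (\<lambda>u. f u + g (z - u)))"
  proof (rule bdd_belowI2[where m = 0])
    fix u
    show "0 \<le> f u + g (z - u)"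
      using cfuns_nonneg[OF assms(1)] cfuns_nonneg[OF assms(2)] by (simp add: add_nonneg_nonneg)
  qed
qed simp

lemma inf_conv_greatest: "(\<And>u. c \<le> f u + g (z - u)) \<Longrightarrow> c \<le> inf_conv f g z"
  unfolding inf_conv_def by (rule cINF_greatest) auto

lemma inf_conv_nfun: "inf_conv (nfun x) (nfun y) = nfun (x + y)"
proof
  fix z
  show "inf_conv (nfun x) (nfun y) z = nfun (x + y) z"
  proof (rule order_antisym)
    have "inf_conv (nfun x) (nfun y) z \<le> nfun x x + nfun y (z - x)"
      by (rule inf_conv_le[OF nfun_in_cfuns nfun_in_cfuns])
    then show "inf_conv (nfun x) (nfun y) z \<le> nfun (x + y) z"
      by (simp add: nfun_def algebra_simps)
    show "nfun (x + y) z \<le> inf_conv (nfun x) (nfun y) z"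
    proof (rule inf_conv_greatest)
      fix u
      have "x + y - z = (x - u) + (y - (z - u))" by (simp add: algebra_simps)
      then show "nfun (x + y) z \<le> nfun x u + nfun y (z - u)"
        unfolding nfun_def by (metis add_le)
    qed
  qed
qed

lemma uniformly_close_inf_conv:
  assumes "f \<in> cfuns" "f' \<in> cfuns" "g \<in> cfuns" "g' \<in> cfuns"
    and "uniformly_close f f' a" "uniformly_close g g' b"
  shows "uniformly_close (inf_conv f g) (inf_conv f' g') (a + b)"
proof -
  have one_side: "inf_conv f g z - (a + b) \<le> inf_conv f' g' z"
    if "f \<in> cfuns" "g \<in> cfuns" "uniformly_close f f' a" "uniformly_close g g' b" for f f' g g' z
  proof (rule inf_conv_greatest)
    fix u
    have "inf_conv f g z \<le> f u + g (z - u)" by (rule inf_conv_le[OF that(1,2)])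
    moreover have "\<bar>f u - f' u\<bar> \<le> a" "\<bar>g (z - u) - g' (z - u)\<bar> \<le> b"
      using that(3,4) unfolding uniformly_close_def by blast+
    ultimately show "inf_conv f g z - (a + b) \<le> f' u + g' (z - u)" by linarith
  qed
  show ?thesis
    unfolding uniformly_close_def
  proof
    fix z
    show "\<bar>inf_conv f g z - inf_conv f' g' z\<bar> \<le> a + b"
      using one_side[OF assms(1,3,5,6), of z]
        one_side[OF assms(2,4) uniformly_close_sym[OF assms(5)] uniformly_close_sym[OF assms(6)], of z]
      by linarith
  qed
qed

lemma uniformly_close_inf_conv_nfun:
  assumes "f \<in> cfuns" "g \<in> cfuns" "uniformly_close f (nfun x) a" "uniformly_close g (nfun y) b"
  shows "uniformly_close (inf_conv f g) (nfun (x + y)) (a + b)"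
  using uniformly_close_inf_conv[OF assms(1) nfun_in_cfuns assms(2) nfun_in_cfuns assms(3,4)]
  by (simp add: inf_conv_nfun)

lemma inf_conv_in_cfuns:
  assumes "f \<in> cfuns" "g \<in> cfuns"
  shows "inf_conv f g \<in> cfuns"
proof (rule cfunsI)
  fix e :: real assume "e > 0"
  obtain x y where "uniformly_close f (nfun x) (e/2)" "uniformly_close g (nfun y) (e/2)"
    using cfuns_approx[OF assms(1), of "e/2"] cfuns_approx[OF assms(2), of "e/2"] \<open>e > 0\<close> by auto
  then have "uniformly_close (inf_conv f g) (nfun (x + y)) (e/2 + e/2)"
    by (rule uniformly_close_inf_conv_nfun[OF assms])
  then show "\<exists>h\<in>cfuns. uniformly_close (inf_conv f g) h e"
    using nfun_in_cfuns by auto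
qed

lemma nfun_comp_uminus: "nfun x \<circ> uminus = nfun (- x)"
proof
  fix z
  have "N (x - - z) = N (- x - z)" using minus[of "x + z"] by (simp add: add.commute)
  then show "(nfun x \<circ> uminus) z = nfun (- x) z" by (simp add: nfun_def)
qed

lemma comp_uminus_in_cfuns:
  assumes "f \<in> cfuns"
  shows "f \<circ> uminus \<in> cfuns"
proof (rule cfunsI)
  fix e :: real assume "e > 0"
  then obtain x where "uniformly_close f (nfun x) e" using cfuns_approx[OF assms] by blast
  then have "uniformly_close (f \<circ> uminus) (nfun (- x)) e"
    using uniformly_close_comp nfun_comp_uminus by metis
  then show "\<exists>g\<in>cfuns. uniformly_close (f \<circ> uminus) g e" using nfun_in_cfuns by blast
qed

text \<open>The group laws transfer from \<open>G\<close> by approximating every argument by some \<open>nfun x\<close>.\<close>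

lemma inf_conv_assoc:
  assumes "f \<in> cfuns" "g \<in> cfuns" "h \<in> cfuns"
  shows "inf_conv (inf_conv f g) h = inf_conv f (inf_conv g h)"
proof (rule eq_if_uniformly_close_approx)
  fix e :: real assume "e > 0"
  obtain x y w where x: "uniformly_close f (nfun x) (e/2)" and y: "uniformly_close g (nfun y) (e/4)"
    and w: "uniformly_close h (nfun w) (e/4)"
    using cfuns_approx[OF assms(1), of "e/2"] cfuns_approx[OF assms(2), of "e/4"]
      cfuns_approx[OF assms(3), of "e/4"] \<open>e > 0\<close> by auto
  have "uniformly_close (inf_conv (inf_conv f g) h) (nfun (x + y + w)) ((e/2 + e/4) + e/4)"
    by (intro uniformly_close_inf_conv_nfun inf_conv_in_cfuns assms x y w)
  moreover have "uniformly_close (inf_conv f (inf_conv g h)) (nfun (x + (y + w))) (e/2 + (e/4 + e/4))"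
    by (intro uniformly_close_inf_conv_nfun inf_conv_in_cfuns assms x y w)
  ultimately show "\<exists>k. uniformly_close (inf_conv (inf_conv f g) h) k e \<and>
      uniformly_close (inf_conv f (inf_conv g h)) k e"
    by (auto simp: add.assoc)
qed

lemma inf_conv_commute:
  assumes "f \<in> cfuns" "g \<in> cfuns"
  shows "inf_conv f g = inf_conv g f"
proof (rule eq_if_uniformly_close_approx)
  fix e :: real assume "e > 0"
  obtain x y where x: "uniformly_close f (nfun x) (e/2)" and y: "uniformly_close g (nfun y) (e/2)"
    using cfuns_approx[OF assms(1), of "e/2"] cfuns_approx[OF assms(2), of "e/2"] \<open>e > 0\<close> by auto
  have "uniformly_close (inf_conv f g) (nfun (x + y)) (e/2 + e/2)"
    by (rule uniformly_close_inf_conv_nfun[OF assms x y])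
  moreover have "uniformly_close (inf_conv g f) (nfun (y + x)) (e/2 + e/2)"
    by (rule uniformly_close_inf_conv_nfun[OF assms(2,1) y x])
  ultimately show "\<exists>k. uniformly_close (inf_conv f g) k e \<and> uniformly_close (inf_conv g f) k e"
    by (auto simp: add.commute)
qed

lemma inf_conv_nfun_zero:
  assumes "f \<in> cfuns"
  shows "inf_conv (nfun 0) f = f"
proof (rule eq_if_uniformly_close_approx)
  fix e :: real assume "e > 0"
  then obtain x where x: "uniformly_close f (nfun x) e" using cfuns_approx[OF assms] by blast
  have "uniformly_close (inf_conv (nfun 0) f) (nfun (0 + x)) (0 + e)"
    by (rule uniformly_close_inf_conv_nfun[OF nfun_in_cfuns assms uniformly_close_refl x]) simp
  then show "\<exists>k. uniformly_close (inf_conv (nfun 0) f) k e \<and> uniformly_close f k e"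
    using x by auto
qed

lemma inf_conv_comp_uminus:
  assumes "f \<in> cfuns"
  shows "inf_conv (f \<circ> uminus) f = nfun 0"
proof (rule eq_if_uniformly_close_approx)
  fix e :: real assume "e > 0"
  then obtain x where x: "uniformly_close f (nfun x) (e/2)"
    using cfuns_approx[OF assms, of "e/2"] by auto
  then have "uniformly_close (f \<circ> uminus) (nfun (- x)) (e/2)"
    using uniformly_close_comp nfun_comp_uminus by metis
  then have "uniformly_close (inf_conv (f \<circ> uminus) f) (nfun (- x + x)) (e/2 + e/2)"
    by (rule uniformly_close_inf_conv_nfun[OF comp_uminus_in_cfuns[OF assms] assms _ x])
  then show "\<exists>k. uniformly_close (inf_conv (f \<circ> uminus) f) k e \<and> uniformly_close (nfun 0) k e"
    using uniformly_close_refl[of e "nfun 0"] \<open>e > 0\<close> by auto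
qed

text \<open>Elements of the completion are stored as the families of their strict sublevel sets, so that
  it lives in the type \<open>'a set set\<close> required by \<open>model_set\<close>. The encoding is injective on
  \<open>cfuns\<close> because \<open>f y\<close> is the limit of \<open>N (y\<^sub>1 - y)\<close> over points \<open>y\<^sub>1\<close> where \<open>f\<close> is small.\<close>

definition encode :: "('a \<Rightarrow> real) \<Rightarrow> 'a set set" where
  "encode f = {{y. f y < r} | r. r > 0}"

lemma le_if_encode_eq:
  assumes "f \<in> cfuns" "g \<in> cfuns" "encode f = encode g"
  shows "f y \<le> g y"
proof (rule field_le_epsilon)
  fix t :: real assume "t > 0"
  have "{y. f y < t/2} \<in> encode f"
    unfolding encode_def using \<open>t > 0\<close> by (intro CollectI exI[of _ "t/2"] conjI) simp_all
  then have "{y. f y < t/2} \<in> encode g" using assms(3) by simp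
  then obtain r where r: "r > 0" "{y. f y < t/2} = {y. g y < r}"
    unfolding encode_def by auto
  obtain y1 where y1: "g y1 \<le> min r (t/2) / 2"
    using cfuns_small_value[OF assms(2), of "min r (t/2) / 2"] r(1) \<open>t > 0\<close> by auto
  then have "g y1 < r" using r(1) \<open>t > 0\<close> by linarith
  then have "f y1 < t/2" using r(2) by blast
  moreover have "f y \<le> f y1 + N (y1 - y)" by (rule cfuns_lipschitz[OF assms(1)])
  moreover have "N (y1 - y) \<le> g y1 + g y" by (rule cfuns_triangle[OF assms(2)])
  ultimately show "f y \<le> g y + t" using y1 \<open>t > 0\<close> by linarith
qed

lemma inj_on_encode: "inj_on encode cfuns"
  by (rule inj_onI) (blast intro: ext order_antisym le_if_encode_eq)

definition cpl :: "'a set set set" where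
  "cpl = encode ` cfuns"

definition decode :: "'a set set \<Rightarrow> 'a \<Rightarrow> real" where
  "decode = inv_into cfuns encode"

definition cpl_dist :: "'a set set \<Rightarrow> 'a set set \<Rightarrow> real" where
  "cpl_dist a b = (if a \<in> cpl \<and> b \<in> cpl then sup_dist (decode a) (decode b) else 0)"

definition cpl_emb :: "'a \<Rightarrow> 'a set set" where
  "cpl_emb x = encode (nfun x)"

definition cpl_add :: "'a set set \<Rightarrow> 'a set set \<Rightarrow> 'a set set" where
  "cpl_add a b = encode (inf_conv (decode a) (decode b))"

definition cpl_neg :: "'a set set \<Rightarrow> 'a set set" where
  "cpl_neg a = encode (decode a \<circ> uminus)"

lemma decode_encode [simp]: "f \<in> cfuns \<Longrightarrow> decode (encode f) = f"
  unfolding decode_def by (rule inv_into_f_f[OF inj_on_encode])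

lemma encode_in_cpl [simp]: "f \<in> cfuns \<Longrightarrow> encode f \<in> cpl"
  unfolding cpl_def by blast

lemma decode_in_cfuns: "a \<in> cpl \<Longrightarrow> decode a \<in> cfuns"
  unfolding cpl_def by auto

lemma encode_decode [simp]: "a \<in> cpl \<Longrightarrow> encode (decode a) = a"
  unfolding cpl_def by auto

lemma cpl_emb_in_cpl [simp]: "cpl_emb x \<in> cpl"
  unfolding cpl_emb_def by (simp add: nfun_in_cfuns)

lemma decode_cpl_emb [simp]: "decode (cpl_emb x) = nfun x"
  unfolding cpl_emb_def by (simp add: nfun_in_cfuns)

lemma cpl_dist_emb [simp]: "cpl_dist (cpl_emb x) (cpl_emb y) = N (x - y)"
  unfolding cpl_dist_def by (simp add: sup_dist_nfun)

lemma Metric_space_cpl: "Metric_space cpl cpl_dist"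
proof
  fix a b c
  show "0 \<le> cpl_dist a b"
    unfolding cpl_dist_def by (simp add: sup_dist_nonneg decode_in_cfuns)
  show "cpl_dist a b = cpl_dist b a"
    unfolding cpl_dist_def by (simp add: sup_dist_commute)
  assume abc: "a \<in> cpl" "b \<in> cpl"
  then show "cpl_dist a b = 0 \<longleftrightarrow> a = b"
    unfolding cpl_dist_def by (metis decode_in_cfuns encode_decode sup_dist_eq_0_iff)
  assume "c \<in> cpl"
  then show "cpl_dist a c \<le> cpl_dist a b + cpl_dist b c"
    using abc unfolding cpl_dist_def by (simp add: sup_dist_triangle decode_in_cfuns)
qed

end

sublocale group_seminorm \<subseteq> H: Metric_space cpl cpl_dist
  by (rule Metric_space_cpl)

context group_seminorm
begin

lemma cpl_emb_dense:
  assumes "a \<in> cpl" "e > 0"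
  shows "\<exists>x. cpl_dist a (cpl_emb x) \<le> e"
proof -
  obtain x where "uniformly_close (decode a) (nfun x) e"
    using cfuns_approx[OF decode_in_cfuns[OF assms(1)] assms(2)] ..
  then have "cpl_dist a (cpl_emb x) \<le> e"
    using assms(1) unfolding cpl_dist_def by (simp add: sup_dist_le)
  then show ?thesis ..
qed

lemma mcomplete_cpl: "H.mcomplete"
  unfolding H.mcomplete_def
proof (intro allI impI)
  fix \<sigma> assume "H.MCauchy \<sigma>"
  then have \<sigma>: "\<sigma> n \<in> cpl" and cauchy: "\<And>e. e > 0 \<Longrightarrow>
      \<exists>M. \<forall>m n. M \<le> m \<longrightarrow> M \<le> n \<longrightarrow> cpl_dist (\<sigma> m) (\<sigma> n) < e" for n
    unfolding H.MCauchy_def by auto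
  define f where "f n = decode (\<sigma> n)" for n
  have f: "f n \<in> cfuns" for n
    unfolding f_def using \<sigma> by (rule decode_in_cfuns)
  have dist_f: "cpl_dist (\<sigma> m) (\<sigma> n) = sup_dist (f m) (f n)" for m n
    unfolding cpl_dist_def f_def using \<sigma> by simp
  obtain \<phi> where \<phi>: "\<phi> \<in> cfuns"
    and close: "\<And>e. e > 0 \<Longrightarrow> \<forall>\<^sub>F n in sequentially. uniformly_close (f n) \<phi> e"
    using cfuns_complete[OF f cauchy[unfolded dist_f]] by blast
  have "limitin H.mtopology \<sigma> (encode \<phi>) sequentially"
    unfolding H.limitin_metric
  proof (intro conjI allI impI)
    show "encode \<phi> \<in> cpl" using \<phi> by simp
    fix e :: real assume "e > 0"
    then have "\<forall>\<^sub>F n in sequentially. uniformly_close (f n) \<phi> (e/2)"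
      by (intro close) simp
    then show "\<forall>\<^sub>F n in sequentially. \<sigma> n \<in> cpl \<and> cpl_dist (\<sigma> n) (encode \<phi>) < e"
    proof eventually_elim
      case (elim n)
      then have "sup_dist (f n) \<phi> \<le> e/2" by (rule sup_dist_le)
      moreover have "cpl_dist (\<sigma> n) (encode \<phi>) = sup_dist (f n) \<phi>"
        unfolding cpl_dist_def f_def using \<sigma> \<phi> by simp
      ultimately show ?case using \<sigma> \<open>e > 0\<close> by simp
    qed
  qed
  then show "\<exists>x. limitin H.mtopology \<sigma> x sequentially" ..
qed

lemma cpl_add_in_cpl [simp]: "a \<in> cpl \<Longrightarrow> b \<in> cpl \<Longrightarrow> cpl_add a b \<in> cpl"
  unfolding cpl_add_def by (simp add: inf_conv_in_cfuns decode_in_cfuns)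

lemma cpl_neg_in_cpl [simp]: "a \<in> cpl \<Longrightarrow> cpl_neg a \<in> cpl"
  unfolding cpl_neg_def by (simp add: comp_uminus_in_cfuns decode_in_cfuns)

lemma cpl_add_emb [simp]: "cpl_add (cpl_emb x) (cpl_emb y) = cpl_emb (x + y)"
  unfolding cpl_add_def decode_cpl_emb by (simp add: inf_conv_nfun cpl_emb_def)

lemma cpl_neg_emb [simp]: "cpl_neg (cpl_emb x) = cpl_emb (- x)"
  unfolding cpl_neg_def decode_cpl_emb by (simp add: nfun_comp_uminus cpl_emb_def)

lemma cpl_add_assoc:
  "a \<in> cpl \<Longrightarrow> b \<in> cpl \<Longrightarrow> c \<in> cpl \<Longrightarrow> cpl_add (cpl_add a b) c = cpl_add a (cpl_add b c)"
  unfolding cpl_add_def by (simp add: inf_conv_in_cfuns decode_in_cfuns inf_conv_assoc)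

lemma cpl_add_commute: "a \<in> cpl \<Longrightarrow> b \<in> cpl \<Longrightarrow> cpl_add a b = cpl_add b a"
  unfolding cpl_add_def by (simp add: decode_in_cfuns inf_conv_commute)

lemma cpl_add_zero_left: "a \<in> cpl \<Longrightarrow> cpl_add (cpl_emb 0) a = a"
  unfolding cpl_add_def by (simp add: decode_in_cfuns inf_conv_nfun_zero)

lemma cpl_add_neg_left: "a \<in> cpl \<Longrightarrow> cpl_add (cpl_neg a) a = cpl_emb 0"
  unfolding cpl_add_def cpl_neg_def
  by (simp add: decode_in_cfuns comp_uminus_in_cfuns inf_conv_comp_uminus cpl_emb_def)

lemma cpl_dist_add_le:
  assumes "a \<in> cpl" "a' \<in> cpl" "b \<in> cpl" "b' \<in> cpl"
  shows "cpl_dist (cpl_add a b) (cpl_add a' b') \<le> cpl_dist a a' + cpl_dist b b'"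
proof -
  note decoded = decode_in_cfuns[OF assms(1)] decode_in_cfuns[OF assms(2)]
    decode_in_cfuns[OF assms(3)] decode_in_cfuns[OF assms(4)]
  have "uniformly_close (inf_conv (decode a) (decode b)) (inf_conv (decode a') (decode b'))
      (sup_dist (decode a) (decode a') + sup_dist (decode b) (decode b'))"
    using decoded by (intro uniformly_close_inf_conv uniformly_close_sup_dist)
  then show ?thesis
    using assms decoded unfolding cpl_dist_def cpl_add_def by (simp add: sup_dist_le inf_conv_in_cfuns)
qed

lemma cpl_dist_neg_le:
  assumes "a \<in> cpl" "b \<in> cpl"
  shows "cpl_dist (cpl_neg a) (cpl_neg b) \<le> cpl_dist a b"
  using assms unfolding cpl_dist_def cpl_neg_def
  by (simp add: decode_in_cfuns comp_uminus_in_cfuns sup_dist_le uniformly_close_comp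
      uniformly_close_sup_dist)

lemma continuous_map_cpl_add:
  "continuous_map (prod_topology H.mtopology H.mtopology) H.mtopology (\<lambda>p. cpl_add (fst p) (snd p))"
  unfolding H.continuous_map_to_metric
proof (intro ballI allI impI)
  fix p and e :: real
  assume p: "p \<in> topspace (prod_topology H.mtopology H.mtopology)" and "e > 0"
  obtain a b where ab: "p = (a, b)" "a \<in> cpl" "b \<in> cpl" using p by (cases p) auto
  show "\<exists>U. openin (prod_topology H.mtopology H.mtopology) U \<and> p \<in> U \<and>
      (\<forall>q\<in>U. cpl_add (fst q) (snd q) \<in> H.mball (cpl_add (fst p) (snd p)) e)"
  proof (intro exI conjI ballI)
    show "openin (prod_topology H.mtopology H.mtopology) (H.mball a (e/2) \<times> H.mball b (e/2))"
      by (simp add: openin_prod_Times_iff)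
    show "p \<in> H.mball a (e/2) \<times> H.mball b (e/2)" using ab \<open>e > 0\<close> by simp
    fix q assume "q \<in> H.mball a (e/2) \<times> H.mball b (e/2)"
    then obtain a' b' where q: "q = (a', b')" "a' \<in> cpl" "b' \<in> cpl"
      "cpl_dist a a' < e/2" "cpl_dist b b' < e/2" by auto
    then show "cpl_add (fst q) (snd q) \<in> H.mball (cpl_add (fst p) (snd p)) e"
      using cpl_dist_add_le[of a a' b b'] ab by simp
  qed
qed

lemma continuous_map_cpl_neg: "continuous_map H.mtopology H.mtopology cpl_neg"
  unfolding H.continuous_map_to_metric
proof (intro ballI allI impI)
  fix a and e :: real assume "a \<in> topspace H.mtopology" "e > 0"
  then have "a \<in> cpl" by simp
  show "\<exists>U. openin H.mtopology U \<and> a \<in> U \<and> (\<forall>b\<in>U. cpl_neg b \<in> H.mball (cpl_neg a) e)"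
  proof (intro exI conjI ballI)
    show "openin H.mtopology (H.mball a e)" by simp
    show "a \<in> H.mball a e" using \<open>a \<in> cpl\<close> \<open>e > 0\<close> by simp
    fix b assume "b \<in> H.mball a e"
    then show "cpl_neg b \<in> H.mball (cpl_neg a) e"
      using cpl_dist_neg_le[OF \<open>a \<in> cpl\<close>, of b] \<open>a \<in> cpl\<close> by simp
  qed
qed

lemma lca_group_on_cpl:
  assumes "locally_compact_space H.mtopology"
  shows "lca_group_on H.mtopology cpl_add cpl_neg (cpl_emb 0)"
  unfolding lca_group_on_def H.topspace_mtopology
proof (intro conjI ballI)
  fix a b c assume "a \<in> cpl" "b \<in> cpl" "c \<in> cpl"
  then show "cpl_add (cpl_add a b) c = cpl_add a (cpl_add b c)" by (rule cpl_add_assoc)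
next
  fix a b assume "a \<in> cpl" "b \<in> cpl"
  then show "cpl_add a b = cpl_add b a" by (rule cpl_add_commute)
next
  fix a assume "a \<in> cpl"
  then show "cpl_add (cpl_emb 0) a = a" "cpl_add (cpl_neg a) a = cpl_emb 0"
    by (rule cpl_add_zero_left, rule cpl_add_neg_left)
qed (simp_all add: assms continuous_map_cpl_add continuous_map_cpl_neg H.Hausdorff_space_mtopology)

lemma mtotally_bounded_mcball_cpl:
  assumes tb: "\<And>e. e > 0 \<Longrightarrow> \<exists>F. finite F \<and> {x. N x \<le> \<rho>'} \<subseteq> (\<Union>k\<in>F. {x. N (x - k) < e})"
    and "\<rho> < \<rho>'"
  shows "H.mtotally_bounded (H.mcball (cpl_emb c) \<rho>)"
proof (rule H.mtotally_bounded_of_cover[OF H.mcball_subset_mspace])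
  fix e :: real assume "e > 0"
  define \<delta> where "\<delta> = min (e/2) (\<rho>' - \<rho>)"
  have \<delta>: "0 < \<delta>" "\<delta> < e" "\<rho> + \<delta> \<le> \<rho>'"
    using \<open>e > 0\<close> \<open>\<rho> < \<rho>'\<close> unfolding \<delta>_def by auto
  obtain F where F: "finite F" "{x. N x \<le> \<rho>'} \<subseteq> (\<Union>k\<in>F. {x. N (x - k) < e - \<delta>})"
    using tb[of "e - \<delta>"] \<delta> by auto
  have "H.mcball (cpl_emb c) \<rho> \<subseteq> (\<Union>a\<in>cpl_emb ` (+) c ` F. H.mball a e)"
  proof
    fix a assume "a \<in> H.mcball (cpl_emb c) \<rho>"
    then have a: "a \<in> cpl" "cpl_dist (cpl_emb c) a \<le> \<rho>" by auto
    obtain x where x: "cpl_dist a (cpl_emb x) \<le> \<delta>" using cpl_emb_dense[OF a(1) \<delta>(1)] ..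
    have "N (c - x) \<le> cpl_dist (cpl_emb c) a + cpl_dist a (cpl_emb x)"
      using H.triangle[of "cpl_emb c" a "cpl_emb x"] a(1) by simp
    then have "N (x - c) \<le> \<rho>'" using a(2) x \<delta>(3) diff_commute[of c x] by linarith
    then obtain k where k: "k \<in> F" "N (x - c - k) < e - \<delta>" using F(2) by blast
    have "cpl_dist (cpl_emb (c + k)) a \<le> cpl_dist (cpl_emb (c + k)) (cpl_emb x) + cpl_dist (cpl_emb x) a"
      using H.triangle[of "cpl_emb (c + k)" "cpl_emb x" a] a(1) by simp
    also have "cpl_dist (cpl_emb (c + k)) (cpl_emb x) = N (x - c - k)"
      using diff_commute[of "c + k" x] by (simp add: algebra_simps)
    finally have "cpl_dist (cpl_emb (c + k)) a < e"
      using k(2) x H.commute[of a "cpl_emb x"] by linarith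
    then show "a \<in> (\<Union>b\<in>cpl_emb ` (+) c ` F. H.mball b e)" using k(1) a(1) by force
  qed
  then show "\<exists>K. finite K \<and> K \<subseteq> cpl \<and> H.mcball (cpl_emb c) \<rho> \<subseteq> (\<Union>a\<in>K. H.mball a e)"
    using F(1) by (intro exI[of _ "cpl_emb ` (+) c ` F"]) auto
qed

lemma compact_mcball_cpl:
  assumes "\<And>e. e > 0 \<Longrightarrow> \<exists>F. finite F \<and> {x. N x \<le> \<rho>'} \<subseteq> (\<Union>k\<in>F. {x. N (x - k) < e})"
    and "\<rho> < \<rho>'"
  shows "compactin H.mtopology (H.mcball (cpl_emb c) \<rho>)"
proof -
  have "compactin H.mtopology (H.mtopology closure_of H.mcball (cpl_emb c) \<rho>)"
    using mtotally_bounded_mcball_cpl[OF assms] H.mtotally_bounded_eq_compact_closure_of[OF mcomplete_cpl]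
    by blast
  then show ?thesis by (simp add: closure_of_closedin)
qed

lemma cpl_add_neg_cancel:
  assumes "a \<in> cpl" "h \<in> cpl"
  shows "cpl_add a (cpl_add h (cpl_neg a)) = h"
proof -
  have "cpl_add a (cpl_add h (cpl_neg a)) = cpl_add a (cpl_add (cpl_neg a) h)"
    using assms by (simp add: cpl_add_commute[of h])
  also have "\<dots> = cpl_add (cpl_add a (cpl_neg a)) h"
    using assms by (simp add: cpl_add_assoc)
  also have "\<dots> = cpl_add (cpl_add (cpl_neg a) a) h"
    using assms by (simp add: cpl_add_commute[of a])
  also have "\<dots> = h" using assms by (simp add: cpl_add_neg_left cpl_add_zero_left)
  finally show ?thesis .
qed

lemma cpl_dist_add_neg:
  assumes "a \<in> cpl" "h \<in> cpl"
  shows "cpl_dist (cpl_emb 0) (cpl_add h (cpl_neg a)) \<le> cpl_dist a h"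
proof -
  have "cpl_emb 0 = cpl_add a (cpl_neg a)"
    using cpl_add_commute[of a "cpl_neg a"] cpl_add_neg_left[of a] assms(1) by simp
  then have "cpl_dist (cpl_emb 0) (cpl_add h (cpl_neg a)) \<le> cpl_dist a h + cpl_dist (cpl_neg a) (cpl_neg a)"
    using cpl_dist_add_le[of a h "cpl_neg a" "cpl_neg a"] assms by simp
  then show ?thesis using assms by simp
qed

end

section \<open>The completion as internal group of a cut and project scheme\<close>

locale lca_seminorm = group_seminorm N for N :: "'a::{topological_space, ab_group_add} \<Rightarrow> real" +
  fixes R :: real
  assumes lca: "sigma_compact_lca_group TYPE('a)"
    and R_pos: "0 < R"
    and locally_finite_ball: "\<rho> < R \<Longrightarrow> locally_finite_set {x. N x \<le> \<rho>}"
    and relatively_dense_ball: "0 < \<delta> \<Longrightarrow> \<delta> < R \<Longrightarrow> relatively_dense {x. N x \<le> \<delta>}"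
begin

lemma compact_translation:
  fixes K :: "'a set" and a :: 'a
  assumes "compact K"
  shows "compact ((\<lambda>k. k + a) ` K)"
proof -
  have "continuous_on UNIV (\<lambda>p::'a \<times> 'a. fst p + snd p)"
    using lca unfolding sigma_compact_lca_group_def by blast
  then have "continuous_on UNIV ((\<lambda>p::'a \<times> 'a. fst p + snd p) \<circ> (\<lambda>k. (k, a)))"
    by (intro continuous_on_compose continuous_intros) (auto elim: continuous_on_subset)
  then have "continuous_on K (\<lambda>k. k + a)"
    by (auto simp: o_def elim: continuous_on_subset)
  then show ?thesis using assms by (rule compact_continuous_image)
qed

lemma ball_totally_bounded:
  assumes "0 \<le> \<rho>" "\<rho> < R" "e > 0"
  shows "\<exists>F. finite F \<and> {x. N x \<le> \<rho>} \<subseteq> (\<Union>k\<in>F. {x. N (x - k) < e})"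
proof -
  define \<delta> where "\<delta> = min (e/2) ((R - \<rho>)/2)"
  have "0 < \<delta>" using assms unfolding \<delta>_def by simp
  moreover have "\<delta> \<le> e/2" "\<delta> \<le> (R - \<rho>)/2"
    unfolding \<delta>_def by (rule min.cobounded1, rule min.cobounded2)
  ultimately have \<delta>: "0 < \<delta>" "\<delta> < e" "\<delta> < R" "\<rho> + \<delta> < R"
    using assms by (auto simp: field_simps)
  obtain K where K: "compact K" "sumset {x. N x \<le> \<delta>} K = UNIV"
    using relatively_dense_ball[OF \<delta>(1,3)] unfolding relatively_dense_def by blast
  define F where "F = {x. N x \<le> \<rho> + \<delta>} \<inter> K"
  have "finite F"
    using locally_finite_ball[OF \<delta>(4)] K(1) unfolding F_def locally_finite_set_def by blast
  moreover have "{x. N x \<le> \<rho>} \<subseteq> (\<Union>k\<in>F. {x. N (x - k) < e})"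
  proof
    fix x assume x: "x \<in> {x. N x \<le> \<rho>}"
    obtain p k where pk: "N p \<le> \<delta>" "k \<in> K" "x = p + k"
      using K(2) by (metis UNIV_I mem_Collect_eq sumsetE)
    have "N k \<le> N x + N (- p)" using add_le[of x "- p"] pk(3) by (simp add: algebra_simps)
    then have "k \<in> F" using x pk minus[of p] unfolding F_def by auto
    moreover have "N (x - k) < e" using pk \<delta>(2) by simp
    ultimately show "x \<in> (\<Union>k\<in>F. {x. N (x - k) < e})" by blast
  qed
  ultimately show ?thesis by blast
qed

lemma compact_mcball_emb:
  assumes "0 \<le> \<rho>" "\<rho> < R"
  shows "compactin H.mtopology (H.mcball (cpl_emb c) \<rho>)"
proof (rule compact_mcball_cpl)
  show "\<exists>F. finite F \<and> {x. N x \<le> (\<rho> + R) / 2} \<subseteq> (\<Union>k\<in>F. {x. N (x - k) < e})" if "e > 0" for e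
    by (rule ball_totally_bounded) (use assms that in auto)
qed (use assms in simp)

lemma locally_compact_cpl: "locally_compact_space H.mtopology"
  unfolding locally_compact_space_def
proof
  fix a assume "a \<in> topspace H.mtopology"
  then have a: "a \<in> cpl" by simp
  define r where "r = R/2"
  have r: "0 < r" "r < R" using R_pos unfolding r_def by auto
  obtain x where x: "cpl_dist a (cpl_emb x) \<le> r/2" using cpl_emb_dense[OF a, of "r/2"] r by auto
  have "H.mball a (r/2) \<subseteq> H.mcball (cpl_emb x) r"
  proof
    fix b assume "b \<in> H.mball a (r/2)"
    moreover have "cpl_dist (cpl_emb x) b \<le> cpl_dist (cpl_emb x) a + cpl_dist a b"
      using H.triangle a calculation by simp
    ultimately show "b \<in> H.mcball (cpl_emb x) r" using x H.commute[of a "cpl_emb x"] by simp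
  qed
  then show "\<exists>U K. openin H.mtopology U \<and> compactin H.mtopology K \<and> a \<in> U \<and> U \<subseteq> K"
    using compact_mcball_emb[of r x] r a
    by (intro exI[of _ "H.mball a (r/2)"] exI[of _ "H.mcball (cpl_emb x) r"]) auto
qed

lemma lca_group_on_H: "lca_group_on H.mtopology cpl_add cpl_neg (cpl_emb 0)"
  by (rule lca_group_on_cpl[OF locally_compact_cpl])

definition emb_graph :: "('a \<times> 'a set set) set" where
  "emb_graph = range (\<lambda>x. (x, cpl_emb x))"

lemma finite_near_points:
  assumes "compact K" "r < R"
  shows "finite {y \<in> K. N (y - x) \<le> r}"
proof -
  have "{y \<in> K. N (y - x) \<le> r} \<subseteq> (\<lambda>q. q + x) ` ({q. N q \<le> r} \<inter> (\<lambda>k. k + - x) ` K)"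
  proof
    fix y assume "y \<in> {y \<in> K. N (y - x) \<le> r}"
    then show "y \<in> (\<lambda>q. q + x) ` ({q. N q \<le> r} \<inter> (\<lambda>k. k + - x) ` K)"
      by (intro image_eqI[where x = "y - x"]) auto
  qed
  moreover have "finite ({q. N q \<le> r} \<inter> (\<lambda>k. k + - x) ` K)"
    using locally_finite_ball[OF assms(2)] compact_translation[OF assms(1)]
    unfolding locally_finite_set_def by blast
  ultimately show ?thesis by (rule finite_subset[OF _ finite_imageI])
qed

lemma emb_graph_discrete:
  assumes "p \<in> emb_graph"
  shows "\<exists>U. openin (prod_topology euclidean H.mtopology) U \<and> U \<inter> emb_graph = {p}"
proof -
  obtain x where p: "p = (x, cpl_emb x)" using assms unfolding emb_graph_def by auto
  have "locally_compact_space (euclidean :: 'a topology)" "t1_space (euclidean :: 'a topology)"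
    using lca Hausdorff_imp_t1_space unfolding sigma_compact_lca_group_def by blast+
  then have "\<exists>U K. open U \<and> compact K \<and> x \<in> U \<and> U \<subseteq> K" "\<And>S :: 'a set. finite S \<Longrightarrow> closed S"
    unfolding locally_compact_space_def t1_space_closedin_finite by auto
  then obtain U K where UK: "open U" "compact K" "x \<in> U" "U \<subseteq> K" by blast
  define r where "r = R/2"
  have r: "0 < r" "r < R" using R_pos unfolding r_def by auto
  define S where "S = {y \<in> K. N (y - x) \<le> r} - {x}"
  have "closed S"
    using finite_near_points[OF UK(2) r(2), of x] \<open>\<And>S. finite S \<Longrightarrow> closed S\<close>
    unfolding S_def by blast
  show ?thesis
  proof (intro exI conjI equalityI)
    show "openin (prod_topology euclidean H.mtopology) ((U - S) \<times> H.mball (cpl_emb x) r)"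
      using UK(1) \<open>closed S\<close> by (simp add: openin_prod_Times_iff open_Diff)
    have "x \<notin> S" unfolding S_def by blast
    then show "{p} \<subseteq> (U - S) \<times> H.mball (cpl_emb x) r \<inter> emb_graph"
      using UK(3) r(1) unfolding p emb_graph_def by auto
    show "(U - S) \<times> H.mball (cpl_emb x) r \<inter> emb_graph \<subseteq> {p}"
    proof
      fix q assume q: "q \<in> (U - S) \<times> H.mball (cpl_emb x) r \<inter> emb_graph"
      then obtain y where y: "q = (y, cpl_emb y)" unfolding emb_graph_def by auto
      then have "y \<in> U - S" "N (y - x) < r" using q diff_commute[of x y] by auto
      then have "y = x" using UK(4) unfolding S_def by auto
      then show "q \<in> {p}" using y p by simp
    qed
  qed
qed

lemma emb_graph_cocompact:
  "\<exists>K. compactin (prod_topology euclidean H.mtopology) K \<and>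
     (\<forall>q \<in> UNIV \<times> cpl. \<exists>l\<in>emb_graph. \<exists>k\<in>K. q = (fst l + fst k, cpl_add (snd l) (snd k)))"
proof -
  define s where "s = R/4"
  have s: "0 < s" "s < R" "2 * s < R" using R_pos unfolding s_def by auto
  obtain Kg where Kg: "compact Kg" "sumset {x. N x \<le> s} Kg = UNIV"
    using relatively_dense_ball[OF s(1,2)] unfolding relatively_dense_def by blast
  have "\<exists>l\<in>emb_graph. \<exists>k\<in>Kg \<times> H.mcball (cpl_emb 0) (2 * s). q = (fst l + fst k, cpl_add (snd l) (snd k))"
    if q: "q \<in> UNIV \<times> cpl" for q
  proof -
    obtain g h where gh: "q = (g, h)" "h \<in> cpl" using q by (cases q) auto
    obtain y where y: "cpl_dist h (cpl_emb y) \<le> s" using cpl_emb_dense[OF gh(2) s(1)] ..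
    obtain p k where pk: "N p \<le> s" "k \<in> Kg" "g - y = p + k"
      using Kg(2) by (metis UNIV_I mem_Collect_eq sumsetE)
    define x where "x = y + p"
    define h' where "h' = cpl_add h (cpl_neg (cpl_emb x))"
    have "cpl_dist (cpl_emb 0) h' \<le> cpl_dist (cpl_emb x) h"
      unfolding h'_def by (rule cpl_dist_add_neg[OF cpl_emb_in_cpl gh(2)])
    also have "\<dots> \<le> cpl_dist (cpl_emb x) (cpl_emb y) + cpl_dist (cpl_emb y) h"
      using gh(2) H.triangle[of "cpl_emb x" "cpl_emb y" h] by simp
    also have "\<dots> \<le> 2 * s"
      using pk(1) y H.commute[of h "cpl_emb y"] unfolding x_def by simp
    finally have "(k, h') \<in> Kg \<times> H.mcball (cpl_emb 0) (2 * s)"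
      using pk(2) gh(2) unfolding h'_def by simp
    moreover have "cpl_add (cpl_emb x) h' = h"
      unfolding h'_def by (rule cpl_add_neg_cancel[OF cpl_emb_in_cpl gh(2)])
    moreover have "g = x + k" using pk(3) unfolding x_def by (simp add: algebra_simps)
    ultimately show ?thesis unfolding gh(1) emb_graph_def by force
  qed
  moreover have "compactin (prod_topology euclidean H.mtopology) (Kg \<times> H.mcball (cpl_emb 0) (2 * s))"
    using Kg(1) compact_mcball_emb[of "2 * s" 0] s by (simp add: compactin_Times)
  ultimately show ?thesis by blast
qed

lemma closure_of_emb_graph: "H.mtopology closure_of (snd ` emb_graph) = cpl"
proof -
  have "\<exists>y\<in>snd ` emb_graph. y \<in> H.mball a r" if ar: "a \<in> cpl" "r > 0" for a r
  proof -
    obtain x where "cpl_dist a (cpl_emb x) \<le> r/2" using cpl_emb_dense[of a "r/2"] ar by auto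
    then have "cpl_emb x \<in> H.mball a r" using ar by simp
    moreover have "cpl_emb x \<in> snd ` emb_graph" unfolding emb_graph_def by force
    ultimately show ?thesis by blast
  qed
  then show ?thesis unfolding H.metric_closure_of by blast
qed

lemma cut_and_project_scheme_emb_graph:
  "cut_and_project_scheme H.mtopology cpl_add cpl_neg (cpl_emb 0) emb_graph"
  unfolding cut_and_project_scheme_def H.topspace_mtopology
proof (intro conjI ballI)
  show "emb_graph \<subseteq> UNIV \<times> cpl" "(0, cpl_emb 0) \<in> emb_graph" "inj_on fst emb_graph"
    unfolding emb_graph_def by (auto intro: inj_onI)
  fix p q assume "p \<in> emb_graph" "q \<in> emb_graph"
  then show "(fst p + fst q, cpl_add (snd p) (snd q)) \<in> emb_graph"
    "(- fst p, cpl_neg (snd p)) \<in> emb_graph"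
    unfolding emb_graph_def by auto
qed (use emb_graph_discrete emb_graph_cocompact closure_of_emb_graph in auto)

lemma star_map_emb_graph [simp]: "star_map emb_graph x = cpl_emb x"
proof -
  have "(THE l. l \<in> emb_graph \<and> fst l = x) = (x, cpl_emb x)"
    by (rule the_equality) (auto simp: emb_graph_def)
  then show ?thesis unfolding star_map_def by simp
qed

lemma window_set_emb_graph: "window_set emb_graph W = {x. cpl_emb x \<in> W}"
  unfolding window_set_def star_map_emb_graph unfolding emb_graph_def image_image by simp

lemma model_set_window_set_emb_graph:
  assumes "W \<subseteq> cpl" "compactin H.mtopology (H.mtopology closure_of W)"
    and "H.mtopology interior_of W \<noteq> {}"
  shows "model_set (window_set emb_graph W)"
  unfolding model_set_def
  using lca_group_on_H cut_and_project_scheme_emb_graph assms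
  by (intro exI[of _ H.mtopology] exI[of _ cpl_add] exI[of _ cpl_neg] exI[of _ "cpl_emb 0"]
      exI[of _ emb_graph] exI[of _ W]) simp

lemma model_set_if_between_balls:
  assumes e: "0 < e" "e < R"
    and inner: "{x. N x < e} \<subseteq> A" and outer: "A \<subseteq> {x. N x \<le> e}"
    and kernel_closed: "\<And>a z. a \<in> A \<Longrightarrow> N z = 0 \<Longrightarrow> a + z \<in> A"
  shows "model_set A"
proof -
  define W where "W = cpl_emb ` A \<union> H.mball (cpl_emb 0) e"
  have mem: "x \<in> A" if x: "cpl_emb x \<in> W" for x
  proof (cases "cpl_emb x \<in> H.mball (cpl_emb 0) e")
    case True
    then have "N x < e" using minus[of x] by simp
    then show ?thesis using inner by blast
  next
    case False
    then obtain a where "a \<in> A" "cpl_emb x = cpl_emb a" using x unfolding W_def by auto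
    then have "N (x - a) = 0" using cpl_dist_emb[of x a] by simp
    then have "a + (x - a) \<in> A" by (rule kernel_closed[OF \<open>a \<in> A\<close>])
    then show ?thesis by simp
  qed
  have window: "window_set emb_graph W = A"
    unfolding window_set_emb_graph
  proof (intro set_eqI iffI)
    fix x assume "x \<in> A"
    then show "x \<in> {x. cpl_emb x \<in> W}" unfolding W_def by simp
  qed (use mem in simp)
  have "W \<subseteq> H.mcball (cpl_emb 0) e"
  proof
    fix b assume "b \<in> W"
    then consider x where "x \<in> A" "b = cpl_emb x" | "b \<in> H.mball (cpl_emb 0) e"
      unfolding W_def by blast
    then show "b \<in> H.mcball (cpl_emb 0) e"
    proof cases
      case 1
      then show ?thesis using outer minus[of x] by auto
    qed auto
  qed
  then have "H.mtopology closure_of W \<subseteq> H.mcball (cpl_emb 0) e"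
    by (rule closure_of_minimal) simp
  then have compact: "compactin H.mtopology (H.mtopology closure_of W)"
    using compact_mcball_emb[of e 0] e by (auto intro: closed_compactin)
  have "H.mball (cpl_emb 0) e \<subseteq> H.mtopology interior_of W"
    unfolding W_def by (intro interior_of_maximal) auto
  then have interior: "H.mtopology interior_of W \<noteq> {}"
    using e(1) by (metis H.centre_in_mball_iff cpl_emb_in_cpl empty_iff subsetD)
  have "W \<subseteq> cpl" unfolding W_def by auto
  then show ?thesis
    using model_set_window_set_emb_graph[OF _ compact interior] window by simp
qed

end

section \<open>The pseudonorm of a scale family\<close>

locale scale_family =
  fixes P :: "real \<Rightarrow> 'a::{topological_space, ab_group_add} set" and C :: real
  assumes C_pos: "C > 0"
    and A1: "\<And>e. 0 < e \<Longrightarrow> e < C \<Longrightarrow> 0 \<in> P e \<and> uminus ` P e = P e"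
    and A2: "\<And>e. 0 < e \<Longrightarrow> e < C \<Longrightarrow> locally_finite_set (P e)"
    and A3: "\<And>e e'. 0 < e \<Longrightarrow> 0 < e' \<Longrightarrow> e + e' < C \<Longrightarrow> sumset (P e) (P e') \<subseteq> P (e + e')"
    and A4: "\<And>e. 0 < e \<Longrightarrow> e < C \<Longrightarrow> relatively_dense (P e)"
begin

lemma zero_mem: "0 < e \<Longrightarrow> e < C \<Longrightarrow> 0 \<in> P e"
  using A1 by blast

lemma uminus_mem: "0 < e \<Longrightarrow> e < C \<Longrightarrow> x \<in> P e \<Longrightarrow> - x \<in> P e"
  using A1[of e] by (metis image_eqI)

lemma add_mem: "0 < e \<Longrightarrow> 0 < e' \<Longrightarrow> e + e' < C \<Longrightarrow> x \<in> P e \<Longrightarrow> y \<in> P e' \<Longrightarrow> x + y \<in> P (e + e')"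
  using A3 sumsetI by blast

lemma mono_mem:
  assumes "0 < e" "e \<le> e'" "e' < C" "x \<in> P e"
  shows "x \<in> P e'"
proof (cases "e = e'")
  case False
  then have "x + 0 \<in> P (e + (e' - e))"
    using assms by (intro add_mem zero_mem) auto
  then show ?thesis by simp
qed (use assms in simp)

definition scale_norm :: "'a \<Rightarrow> real" where
  "scale_norm w = Inf (insert C {e. 0 < e \<and> e < C \<and> w \<in> P e})"

lemma bdd_below_scales: "bdd_below (insert C {e. 0 < e \<and> e < C \<and> w \<in> P e})"
  by (rule bdd_belowI[of _ 0]) (use C_pos in auto)

lemma scale_norm_nonneg: "0 \<le> scale_norm w"
  unfolding scale_norm_def by (rule cInf_greatest) (use C_pos in auto)

lemma scale_norm_le_C: "scale_norm w \<le> C"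
  unfolding scale_norm_def by (rule cInf_lower[OF _ bdd_below_scales]) simp

lemma scale_norm_le: "0 < e \<Longrightarrow> e < C \<Longrightarrow> w \<in> P e \<Longrightarrow> scale_norm w \<le> e"
  unfolding scale_norm_def by (rule cInf_lower[OF _ bdd_below_scales]) simp

lemma mem_if_scale_norm_less:
  assumes "scale_norm w < s" "s < C"
  shows "w \<in> P s"
proof -
  obtain e where "e \<in> insert C {e. 0 < e \<and> e < C \<and> w \<in> P e}" "e < s"
    using cInf_lessD[of "insert C {e. 0 < e \<and> e < C \<and> w \<in> P e}" s] assms
    unfolding scale_norm_def by auto
  then show ?thesis using assms mono_mem[of e s w] by auto
qed

lemma scale_norm_eq_0_iff: "scale_norm w = 0 \<longleftrightarrow> w \<in> \<Inter>{P e' | e'. 0 < e' \<and> e' < C}"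
proof
  assume w: "scale_norm w = 0"
  show "w \<in> \<Inter>{P e' | e'. 0 < e' \<and> e' < C}"
  proof
    fix S assume "S \<in> {P e' | e'. 0 < e' \<and> e' < C}"
    then obtain e' where e': "S = P e'" "0 < e'" "e' < C" by blast
    have "w \<in> P e'" by (rule mem_if_scale_norm_less) (use w e' in linarith)+
    then show "w \<in> S" using e'(1) by blast
  qed
next
  assume w: "w \<in> \<Inter>{P e' | e'. 0 < e' \<and> e' < C}"
  have "scale_norm w \<le> 0 + t" if t: "t > 0" for t
  proof -
    have m: "0 < min t (C/2)" "min t (C/2) < C" using t C_pos by auto
    then have "w \<in> P (min t (C/2))" using w by blast
    then have "scale_norm w \<le> min t (C/2)" using m by (intro scale_norm_le)
    then show ?thesis by linarith
  qed
  then show "scale_norm w = 0"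
    using field_le_epsilon[of "scale_norm w" 0] scale_norm_nonneg[of w] by simp
qed

lemma scale_norm_add_le: "scale_norm (v + w) \<le> scale_norm v + scale_norm w"
proof (cases "scale_norm v + scale_norm w < C")
  case False
  then show ?thesis using scale_norm_le_C[of "v + w"] by linarith
next
  case True
  show ?thesis
  proof (rule field_le_epsilon)
    fix e :: real assume "e > 0"
    define t where "t = min (e/2) ((C - scale_norm v - scale_norm w) / 3)"
    have "0 < t" using \<open>e > 0\<close> True unfolding t_def by simp
    moreover have "t \<le> e/2" "t \<le> (C - scale_norm v - scale_norm w) / 3"
      unfolding t_def by (rule min.cobounded1, rule min.cobounded2)
    ultimately have t: "0 < t" "2 * t \<le> e" "scale_norm v + t + (scale_norm w + t) < C"
      using True by auto
    have "v \<in> P (scale_norm v + t)" "w \<in> P (scale_norm w + t)"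
      using t scale_norm_nonneg[of v] scale_norm_nonneg[of w]
      by (intro mem_if_scale_norm_less; linarith)+
    then have "v + w \<in> P (scale_norm v + t + (scale_norm w + t))"
      using t scale_norm_nonneg[of v] scale_norm_nonneg[of w] by (intro add_mem) auto
    then have "scale_norm (v + w) \<le> scale_norm v + t + (scale_norm w + t)"
      using t scale_norm_nonneg[of v] scale_norm_nonneg[of w] by (intro scale_norm_le) auto
    then show "scale_norm (v + w) \<le> scale_norm v + scale_norm w + e" using t by linarith
  qed
qed

sublocale group_seminorm scale_norm
proof
  fix x y
  show "0 \<le> scale_norm x" by (rule scale_norm_nonneg)
  show "scale_norm 0 = 0"
    unfolding scale_norm_eq_0_iff using zero_mem by blast
  have "{e. 0 < e \<and> e < C \<and> - x \<in> P e} = {e. 0 < e \<and> e < C \<and> x \<in> P e}"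
    using uminus_mem by fastforce
  then show "scale_norm (- x) = scale_norm x" by (simp add: scale_norm_def)
  show "scale_norm (x + y) \<le> scale_norm x + scale_norm y" by (rule scale_norm_add_le)
qed

lemma lca_seminorm_scale_norm:
  assumes "sigma_compact_lca_group TYPE('a)"
  shows "lca_seminorm scale_norm C"
proof
  show "sigma_compact_lca_group TYPE('a)" by (fact assms)
  show "0 < C" by (fact C_pos)
next
  fix \<rho> :: real assume "\<rho> < C"
  define \<rho>' where "\<rho>' = (max \<rho> 0 + C) / 2"
  have \<rho>': "0 < \<rho>'" "\<rho> < \<rho>'" "\<rho>' < C" using \<open>\<rho> < C\<close> C_pos unfolding \<rho>'_def by auto
  have "{x. scale_norm x \<le> \<rho>} \<subseteq> P \<rho>'"
    using \<rho>' by (auto intro: mem_if_scale_norm_less)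
  then show "locally_finite_set {x. scale_norm x \<le> \<rho>}"
    by (rule locally_finite_set_subset[OF A2[OF \<rho>'(1,3)]])
next
  fix \<delta> :: real assume "0 < \<delta>" "\<delta> < C"
  then have "P \<delta> \<subseteq> {x. scale_norm x \<le> \<delta>}" by (auto intro: scale_norm_le)
  then show "relatively_dense {x. scale_norm x \<le> \<delta>}"
    by (rule relatively_dense_mono[OF A4[OF \<open>0 < \<delta>\<close> \<open>\<delta> < C\<close>]])
qed

lemma model_set_sumset_kernel:
  assumes "sigma_compact_lca_group TYPE('a)" "0 < e" "e < C"
  shows "model_set (sumset (P e) (\<Inter>{P e' | e'. 0 < e' \<and> e' < C}))"
    (is "model_set (sumset (P e) ?K)")
proof -
  interpret L: lca_seminorm scale_norm C by (rule lca_seminorm_scale_norm[OF assms(1)])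
  have kernel: "scale_norm z = 0 \<longleftrightarrow> z \<in> ?K" for z by (rule scale_norm_eq_0_iff)
  show ?thesis
  proof (rule L.model_set_if_between_balls[OF assms(2,3)])
    show "{x. scale_norm x < e} \<subseteq> sumset (P e) ?K"
    proof
      fix x assume "x \<in> {x. scale_norm x < e}"
      then have "x \<in> P e" using mem_if_scale_norm_less assms(3) by blast
      moreover have "0 \<in> ?K" using kernel[of 0] by simp
      ultimately have "x + 0 \<in> sumset (P e) ?K" by (rule sumsetI)
      then show "x \<in> sumset (P e) ?K" by simp
    qed
    show "sumset (P e) ?K \<subseteq> {x. scale_norm x \<le> e}"
    proof
      fix x assume "x \<in> sumset (P e) ?K"
      then obtain p q where pq: "p \<in> P e" "q \<in> ?K" "x = p + q" by (rule sumsetE)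
      have "scale_norm x \<le> scale_norm p + scale_norm q" using add_le[of p q] pq(3) by simp
      moreover have "scale_norm p \<le> e" by (rule scale_norm_le[OF assms(2,3) pq(1)])
      moreover have "scale_norm q = 0" using kernel[of q] pq(2) by blast
      ultimately show "x \<in> {x. scale_norm x \<le> e}" by simp
    qed
    fix a z assume "a \<in> sumset (P e) ?K" "scale_norm z = 0"
    then obtain p q where pq: "p \<in> P e" "q \<in> ?K" "a = p + q" by (auto elim: sumsetE)
    have "scale_norm q = 0" using kernel[of q] pq(2) by blast
    then have "scale_norm (q + z) = 0"
      using add_le[of q z] nonneg[of "q + z"] \<open>scale_norm z = 0\<close> by simp
    then have "p + (q + z) \<in> sumset (P e) ?K" using pq kernel by (intro sumsetI) auto
    then show "a + z \<in> sumset (P e) ?K" using pq(3) by (simp add: add.assoc)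
  qed
qed

end

theorem corollary2p10:
  fixes P :: "real \<Rightarrow> 'a::{topological_space, ab_group_add} set" and C :: real
  assumes G: "sigma_compact_lca_group TYPE('a)"
    and C: "C > 0"
    and A1: "\<And>e. 0 < e \<Longrightarrow> e < C \<Longrightarrow> 0 \<in> P e \<and> uminus ` P e = P e"
    and A2: "\<And>e. 0 < e \<Longrightarrow> e < C \<Longrightarrow> locally_finite_set (P e)"
    and A3: "\<And>e e'. 0 < e \<Longrightarrow> 0 < e' \<Longrightarrow> e + e' < C \<Longrightarrow> sumset (P e) (P e') \<subseteq> P (e + e')"
    and A4: "\<And>e. 0 < e \<Longrightarrow> e < C \<Longrightarrow> relatively_dense (P e)"
  shows "(\<forall>e. 0 < e \<and> e < C \<longrightarrow> model_set (sumset (P e) (\<Inter>{P e' | e'. 0 < e' \<and> e' < C}))) \<and>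
         (\<Inter>{P e' | e'. 0 < e' \<and> e' < C} = {0} \<longrightarrow> (\<forall>e. 0 < e \<and> e < C \<longrightarrow> model_set (P e)))"
proof -
  interpret scale_family P C
    using C A1 A2 A3 A4 by unfold_locales
  have "model_set (sumset (P e) (\<Inter>{P e' | e'. 0 < e' \<and> e' < C}))" if "0 < e" "e < C" for e
    using model_set_sumset_kernel[OF G that] .
  then show ?thesis by auto
qed

end
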